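(* Let $n\geqslant 3$, $-1<\alpha<\infty$ and $0<r<1$. There exist positive constants $C_1=C_1(n,\alpha)$ and $C_2=C_2(n)$ such that for every $x\in\partial\mathbb{B}_n$, \[ C_1\frac{c_\alpha}{\alpha+1}r^{n+\alpha}(2-r)^{\alpha+1}\leqslant |\widehat{B}_\rho(x,r)|_\alpha\leqslant C_2\frac{c_\alpha}{\alpha+1}r^{n+\alpha}(2-r)^{\alpha+1}. \]
   Context: $\mathbb{B}_n$ is the real unit ball of $\mathbb{R}^n$ and $\partial\mathbb{B}_n$ its boundary sphere; $\nu$ is Lebesgue measure normalized with $\nu(\mathbb{B}_n)=1$, $d\nu_\alpha(z)=c_\alpha(1-|z|^2)^\alpha d\nu(z)$ with $c_\alpha$ such that $\nu_\alpha(\mathbb{B}_n)=1$, and $|E|_\alpha=\nu_\alpha(E)$. For $x,y\in\partial\mathbb{B}_n$, $\rho(x,y)=\arccos\langle x,y\rangle\in[0,\pi]$. For $x\in\partial\mathbb{B}_n$, $0<r<1$: $B_\rho(x,r)=\{y\in\partial\mathbb{B}_n:\rho(x,y)<r\}$ and $\widehat{B}_\rho(x,r)=\{z\in\mathbb{B}_n: z/|z|\in B_\rho(x,r),\ 1-r<|z|<1\}$. *)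

theory Defs
  imports "HOL-Analysis.Analysis"
begin

definition weight :: "real \<Rightarrow> 'a::euclidean_space \<Rightarrow> real" where
  "weight \<alpha> z = (1 - (norm z)\<^sup>2) powr \<alpha>"

text \<open>Normalizing constant c_alpha: nu_alpha(B) = 1 where nu is Lebesgue measure
  normalized so that nu(B) = 1.\<close>
definition c_alpha :: "real \<Rightarrow> 'a::euclidean_space itself \<Rightarrow> real" where
  "c_alpha \<alpha> _ = measure lborel (ball (0::'a) 1) /
     enn2real (\<integral>\<^sup>+ z\<in>ball (0::'a) 1. ennreal (weight \<alpha> z) \<partial>lborel)"

definition nu_alpha :: "real \<Rightarrow> 'a::euclidean_space set \<Rightarrow> real" where
  "nu_alpha \<alpha> E = c_alpha \<alpha> TYPE('a) / measure lborel (ball (0::'a) 1) *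
     enn2real (\<integral>\<^sup>+ z\<in>E \<inter> ball 0 1. ennreal (weight \<alpha> z) \<partial>lborel)"

definition rho :: "'a::euclidean_space \<Rightarrow> 'a \<Rightarrow> real" where
  "rho x y = arccos (inner x y)"

definition Bhat :: "'a::euclidean_space \<Rightarrow> real \<Rightarrow> 'a set" where
  "Bhat x r = {z \<in> ball 0 1. z \<noteq> 0 \<and> rho x (z /\<^sub>R norm z) < r \<and> 1 - r < norm z \<and> norm z < 1}"

end

theory Submission
  imports Defs
begin

(* Let K be the open circular cone of half-angle r around x, so that Bhat x r is the part
   of K \<inter> ball 0 1 with norm z > 1 - r. By scaling, the norm of a uniformly distributed
   point of K \<inter> ball 0 1 has density n t^(n-1) on [0,1]; hence the weighted volume of
   Bhat x r is the volume of K \<inter> ball 0 1 times the integral of (1 - t^2)^\<alpha> n t^(n-1)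
   over (1 - r, 1). This radial factor is comparable to the integral of (1 - t^2)^\<alpha> t,
   which is (r (2 - r))^(\<alpha>+1) / (2 (\<alpha>+1)). The cone factor is comparable to r^(n-1):
   K \<inter> ball 0 1 is covered by about 1/r balls of radius 2r centred on the axis, and it
   contains about 1/r disjoint balls of radius r/8 centred on the axis. *)

section \<open>Circular cones\<close>

definition circular_cone :: "'a::real_inner \<Rightarrow> real \<Rightarrow> 'a set" where
  "circular_cone x r = {z. cos r * norm z < inner x z}"

lemma circular_cone_borel [measurable]: "circular_cone x r \<in> sets borel"
proof -
  have "open (circular_cone x r)"
    unfolding circular_cone_def by (intro open_Collect_less continuous_intros)
  then show ?thesis
    by (rule borel_open)
qed

lemma scaleR_in_circular_cone: "z \<in> circular_cone x r \<Longrightarrow> 0 < c \<Longrightarrow> c *\<^sub>R z \<in> circular_cone x r"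
  unfolding circular_cone_def by (simp add: mult.left_commute[of "cos r"])

lemma rho_normalize_less_iff:
  fixes x z :: "'a::euclidean_space"
  assumes x: "norm x = 1" and r: "0 < r" "r \<le> pi" and z: "z \<noteq> 0"
  shows "rho x (z /\<^sub>R norm z) < r \<longleftrightarrow> z \<in> circular_cone x r"
proof -
  define c where "c = inner x z / norm z"
  have "\<bar>inner x z\<bar> \<le> norm z"
    using Cauchy_Schwarz_ineq2[of x z] x by simp
  then have c: "-1 \<le> c" "c \<le> 1"
    using z by (auto simp: c_def divide_le_eq le_divide_eq abs_le_iff)
  have "rho x (z /\<^sub>R norm z) = arccos c"
    by (simp add: rho_def c_def divide_inverse_commute)
  also have "arccos c < r \<longleftrightarrow> cos r < c"
    using cos_mono_less_eq[of r "arccos c"] arccos_bounded[OF c] cos_arccos[OF c] r by auto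
  also have "\<dots> \<longleftrightarrow> z \<in> circular_cone x r"
    using z by (simp add: c_def circular_cone_def less_divide_eq)
  finally show ?thesis .
qed

lemma Bhat_eq_circular_cone:
  fixes x :: "'a::euclidean_space"
  assumes "norm x = 1" "0 < r" "r < 1"
  shows "Bhat x r = circular_cone x r \<inter> ball 0 1 \<inter> {z. 1 - r < norm z}"
proof (intro set_eqI iffI)
  have "r \<le> pi" using assms pi_gt3 by linarith
  note cone_iff = rho_normalize_less_iff[OF assms(1,2) this]
  fix z
  show "z \<in> Bhat x r \<Longrightarrow> z \<in> circular_cone x r \<inter> ball 0 1 \<inter> {z. 1 - r < norm z}"
    using cone_iff[of z] by (simp add: Bhat_def)
  show "z \<in> circular_cone x r \<inter> ball 0 1 \<inter> {z. 1 - r < norm z} \<Longrightarrow> z \<in> Bhat x r"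
    using cone_iff[of z] assms(3) by (cases "z = 0") (auto simp: Bhat_def circular_cone_def)
qed

section \<open>Polar coordinates on a cone\<close>

lemma emeasure_lborel_vimage_scaleR:
  fixes A :: "'a::euclidean_space set"
  assumes "c \<noteq> 0" "A \<in> sets borel"
  shows "emeasure lborel A = ennreal (\<bar>c\<bar> ^ DIM('a)) * emeasure lborel ((\<lambda>z. c *\<^sub>R z) -` A)"
proof -
  have "emeasure lborel A = emeasure (density (distr lborel borel (\<lambda>z. 0 + c *\<^sub>R z)) (\<lambda>_. \<bar>c\<bar> ^ DIM('a))) A"
    using lborel_affine[where 'a='a, OF assms(1), of 0] by simp
  also have "\<dots> = ennreal (\<bar>c\<bar> ^ DIM('a)) * emeasure lborel ((\<lambda>z. c *\<^sub>R z) -` A)"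
    using assms(2) by (simp add: emeasure_density nn_integral_cmult_indicator emeasure_distr)
  finally show ?thesis .
qed

lemma emeasure_cone_inter_ball:
  fixes K :: "'a::euclidean_space set"
  assumes K: "K \<in> sets borel" and cone: "\<And>z c. z \<in> K \<Longrightarrow> 0 < c \<Longrightarrow> c *\<^sub>R z \<in> K" and t: "0 \<le> t"
  shows "emeasure lborel (K \<inter> ball 0 t) = ennreal (t ^ DIM('a)) * emeasure lborel (K \<inter> ball 0 1)"
proof (cases "t = 0")
  case False
  with t have "(\<lambda>z. t *\<^sub>R z) -` (K \<inter> ball 0 t) = K \<inter> ball 0 1"
    using cone[of _ t] cone[of "t *\<^sub>R _" "1/t"] by (auto simp: divide_simps)
  with False t K show ?thesis by (simp add: emeasure_lborel_vimage_scaleR[of t])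
qed simp

lemma emeasure_cone_inter_cball:
  fixes K :: "'a::euclidean_space set"
  assumes K: "K \<in> sets borel" and cone: "\<And>z c. z \<in> K \<Longrightarrow> 0 < c \<Longrightarrow> c *\<^sub>R z \<in> K" and t: "0 \<le> t"
  shows "emeasure lborel (K \<inter> cball 0 t) = ennreal (t ^ DIM('a)) * emeasure lborel (K \<inter> ball 0 1)"
proof -
  have "sphere (0::'a) t \<in> null_sets lborel"
    using negligible_sphere[of "0::'a" t]
    by (simp add: negligible_iff_null_sets null_sets_completion_iff)
  then have "K \<inter> sphere 0 t \<in> null_sets lborel"
    using K by (auto intro: null_sets_subset)
  moreover have "K \<inter> cball 0 t = (K \<inter> ball 0 t) \<union> (K \<inter> sphere 0 t)"
    by auto
  ultimately have "emeasure lborel (K \<inter> cball 0 t) = emeasure lborel (K \<inter> ball 0 t)"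
    using K by (simp add: emeasure_Un_null_set)
  then show ?thesis
    using emeasure_cone_inter_ball[OF K cone t] by simp
qed

lemma nn_integral_power_derivative_greaterThan:
  assumes "n \<ge> 1"
  shows "(\<integral>\<^sup>+t. ennreal (real n * t ^ (n - 1)) * indicator ({0..1} \<inter> {a<..}) t \<partial>lborel)
       = ennreal (1 - max a 0 ^ n)"
proof -
  have FTC: "(\<integral>\<^sup>+t. ennreal (real n * t ^ (n - 1)) * indicator {b..1} t \<partial>lborel) = ennreal (1 - b ^ n)"
    if "0 \<le> b" "b \<le> 1" for b :: real
    using that assms by (subst nn_integral_FTC_Icc[where F = "\<lambda>t. t ^ n"])
      (auto intro!: derivative_eq_intros)
  consider "a < 0" | "0 \<le> a" "a < 1" | "1 \<le> a" by linarith
  then show ?thesis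
  proof cases
    case 1
    then have "{0..1} \<inter> {a<..} = {0..(1::real)}" by auto
    with 1 FTC[of 0] assms show ?thesis by (simp add: power_0_left)
  next
    case 2
    have "AE t in lborel. t \<noteq> a"
      by (rule AE_lborel_singleton)
    then have "(\<integral>\<^sup>+t. ennreal (real n * t ^ (n - 1)) * indicator ({0..1} \<inter> {a<..}) t \<partial>lborel)
             = (\<integral>\<^sup>+t. ennreal (real n * t ^ (n - 1)) * indicator {a..1} t \<partial>lborel)"
      using 2 by (intro nn_integral_cong_AE) (auto split: split_indicator)
    with 2 FTC[of a] show ?thesis by simp
  next
    case 3
    then have "{0..1} \<inter> {a<..} = {}" by auto
    moreover have "1 - a ^ n \<le> 0" using 3 by simp
    ultimately show ?thesis using 3 by (simp add: ennreal_eq_0_iff)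
  qed
qed

lemma emeasure_cone_inter_ball_norm_greater:
  fixes K :: "'a::euclidean_space set"
  assumes K: "K \<in> sets borel" and cone: "\<And>z c. z \<in> K \<Longrightarrow> 0 < c \<Longrightarrow> c *\<^sub>R z \<in> K"
  shows "emeasure lborel (K \<inter> ball 0 1 \<inter> {z. a < norm z})
       = emeasure lborel (K \<inter> ball 0 1) * ennreal (1 - max a 0 ^ DIM('a))"
proof -
  have fin: "emeasure lborel (K \<inter> ball 0 1) < \<infinity>"
    using emeasure_mono[of "K \<inter> ball 0 1" "ball 0 1" lborel] emeasure_lborel_ball_finite[of "0::'a" 1]
    by auto
  consider "a < 0" | "0 \<le> a" "a < 1" | "1 \<le> a" by linarith
  then show ?thesis
  proof cases
    case 1
    then have "K \<inter> ball 0 1 \<inter> {z. a < norm z} = K \<inter> ball 0 1"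
      by (auto intro: less_le_trans)
    with 1 show ?thesis by (simp add: power_0_left)
  next
    case 2
    have "K \<inter> ball 0 1 \<inter> {z. a < norm z} = K \<inter> ball 0 1 - K \<inter> cball 0 a"
      by auto
    also have "emeasure lborel \<dots> = emeasure lborel (K \<inter> ball 0 1) - emeasure lborel (K \<inter> cball 0 a)"
      using fin K 2 emeasure_mono[of "K \<inter> cball 0 a" "K \<inter> ball 0 1" lborel]
      by (intro emeasure_Diff) (auto simp: subset_iff)
    also have "\<dots> = emeasure lborel (K \<inter> ball 0 1) - ennreal (a ^ DIM('a)) * emeasure lborel (K \<inter> ball 0 1)"
      using 2 by (simp add: emeasure_cone_inter_cball[OF K cone])
    also have "\<dots> = emeasure lborel (K \<inter> ball 0 1) * ennreal (1 - a ^ DIM('a))"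
      using fin 2 by (cases "emeasure lborel (K \<inter> ball 0 1)")
        (auto simp flip: ennreal_mult simp: ennreal_minus right_diff_distrib mult.commute power_le_one)
    finally show ?thesis using 2 by simp
  next
    case 3
    then have "K \<inter> ball 0 1 \<inter> {z. a < norm z} = {}" by auto
    moreover have "1 - a ^ DIM('a) \<le> 0" using 3 by simp
    ultimately show ?thesis using 3 by (simp add: ennreal_eq_0_iff max_def)
  qed
qed

lemma distr_norm_cone_inter_ball:
  fixes K :: "'a::euclidean_space set"
  assumes K: "K \<in> sets borel" and cone: "\<And>z c. z \<in> K \<Longrightarrow> 0 < c \<Longrightarrow> c *\<^sub>R z \<in> K"
  shows "distr (density lborel (indicator (K \<inter> ball 0 1))) borel norm
       = density lborel (\<lambda>t. emeasure lborel (K \<inter> ball 0 1)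
           * ennreal (real DIM('a) * t ^ (DIM('a) - 1)) * indicator {0..1} t)"
  (is "?D = density lborel ?h")
proof (rule measure_eqI_lessThan)
  have "open {z::'a. a < norm z}" for a
    by (intro open_Collect_less continuous_intros)
  then have D: "emeasure ?D {a<..} = emeasure lborel (K \<inter> ball 0 1 \<inter> {z. a < norm z})" for a
    using K by (simp add: emeasure_distr emeasure_restricted vimage_def Int_commute)
  then show "emeasure ?D {a<..} < \<infinity>" for a
    using emeasure_mono[of "K \<inter> ball 0 1 \<inter> {z. a < norm z}" "ball 0 1" lborel]
      emeasure_lborel_ball_finite[of "0::'a" 1] by (auto intro: le_less_trans)
  show "emeasure ?D {a<..} = emeasure (density lborel ?h) {a<..}" for a
  proof -
    have "emeasure (density lborel ?h) {a<..}
        = (\<integral>\<^sup>+t. emeasure lborel (K \<inter> ball 0 1)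
             * (ennreal (real DIM('a) * t ^ (DIM('a) - 1)) * indicator ({0..1} \<inter> {a<..}) t) \<partial>lborel)"
      by (subst emeasure_density) (auto intro!: nn_integral_cong split: split_indicator)
    also have "\<dots> = emeasure lborel (K \<inter> ball 0 1) * ennreal (1 - max a 0 ^ DIM('a))"
      using nn_integral_power_derivative_greaterThan[of "DIM('a)" a]
      by (simp add: nn_integral_cmult Suc_leI)
    finally show ?thesis
      by (simp add: D emeasure_cone_inter_ball_norm_greater[OF K cone])
  qed
qed simp_all

lemma nn_integral_radial_cone:
  fixes K :: "'a::euclidean_space set" and g :: "real \<Rightarrow> ennreal"
  assumes K: "K \<in> sets borel" and cone: "\<And>z c. z \<in> K \<Longrightarrow> 0 < c \<Longrightarrow> c *\<^sub>R z \<in> K"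
    and g[measurable]: "g \<in> borel_measurable borel"
  shows "(\<integral>\<^sup>+z\<in>K \<inter> ball 0 1. g (norm z) \<partial>lborel)
       = emeasure lborel (K \<inter> ball 0 1)
           * (\<integral>\<^sup>+t\<in>{0..1}. g t * ennreal (real DIM('a) * t ^ (DIM('a) - 1)) \<partial>lborel)"
proof -
  have "(\<integral>\<^sup>+z\<in>K \<inter> ball 0 1. g (norm z) \<partial>lborel)
      = (\<integral>\<^sup>+t. g t \<partial>distr (density lborel (indicator (K \<inter> ball 0 1))) borel norm)"
    using K by (simp add: nn_integral_distr, subst nn_integral_density)
      (auto simp: mult.commute intro: borel_measurable_indicator)
  also have "\<dots> = (\<integral>\<^sup>+t. emeasure lborel (K \<inter> ball 0 1)
                    * (g t * ennreal (real DIM('a) * t ^ (DIM('a) - 1)) * indicator {0..1} t) \<partial>lborel)"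
    by (simp add: distr_norm_cone_inter_ball[OF K cone] nn_integral_density ac_simps)
  finally show ?thesis
    by (simp add: nn_integral_cmult)
qed

section \<open>The radial integral\<close>

lemma tendsto_one_minus_square_powr:
  fixes \<beta> :: real
  assumes "0 < \<beta>"
  shows "((\<lambda>t::real. (1 - t\<^sup>2) powr \<beta>) \<longlongrightarrow> 0) (at_left 1)"
  using assms by (intro tendsto_zero_powrI eventually_at_leftI[of 0])
    (auto intro!: tendsto_eq_intros simp: power_le_one)

lemma nn_integral_one_minus_square_powr:
  fixes a \<alpha> :: real
  assumes a: "0 \<le> a" "a < 1" and \<alpha>: "-1 < \<alpha>"
  shows "(\<integral>\<^sup>+t\<in>{a<..<1}. ennreal ((1 - t\<^sup>2) powr \<alpha> * t) \<partial>lborel)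
       = ennreal ((1 - a\<^sup>2) powr (\<alpha> + 1) / (2 * (\<alpha> + 1)))"
proof -
  define f where "f t = (1 - t\<^sup>2) powr \<alpha> * t" for t :: real
  define F where "F t = - ((1 - t\<^sup>2) powr (\<alpha> + 1) / (2 * (\<alpha> + 1)))" for t :: real
  have pos: "0 < 1 - t\<^sup>2" if "a \<le> t" "t < 1" for t
    using that a by (simp add: abs_square_less_1)
  have "DERIV F t :> f t" if "a < t" "t < 1" for t
  proof -
    have "DERIV (\<lambda>t. (1 - t\<^sup>2) powr (\<alpha> + 1)) t :> (\<alpha> + 1) * (1 - t\<^sup>2) powr \<alpha> * (- 2 * t)"
      using pos[of t] that by (auto intro!: derivative_eq_intros)
    then have "DERIV F t :> - ((\<alpha> + 1) * (1 - t\<^sup>2) powr \<alpha> * (- 2 * t) / (2 * (\<alpha> + 1)))"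
      unfolding F_def by (intro DERIV_minus DERIV_cdivide)
    moreover have "- ((\<alpha> + 1) * (1 - t\<^sup>2) powr \<alpha> * (- 2 * t) / (2 * (\<alpha> + 1))) = f t"
      using \<alpha> by (simp add: f_def field_simps)
    ultimately show ?thesis
      by simp
  qed
  moreover have "isCont f t" if "a < t" "t < 1" for t
    using pos[of t] that unfolding f_def by (intro continuous_intros) auto
  moreover have "(F \<longlongrightarrow> F a) (at_right a)"
    using pos[of a] a \<alpha> unfolding F_def
    by (intro tendsto_intros filterlim_at_split[THEN iffD1, THEN conjunct2]) (auto intro!: tendsto_eq_intros)
  moreover have "(F \<longlongrightarrow> 0) (at_left 1)"
    using tendsto_minus[OF tendsto_divide_zero[OF tendsto_one_minus_square_powr, of "\<alpha> + 1" "2 * (\<alpha> + 1)"]] \<alpha>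
    unfolding F_def by simp
  ultimately have integrable: "set_integrable lborel {a<..<1} f"
    and integral: "(LBINT t=ereal a..ereal 1. f t) = 0 - F a"
    using interval_integral_FTC_nonneg[of "ereal a" "ereal 1" F f "F a" 0] a
    by (auto simp: ereal_tendsto_simps1 f_def)
  have "(\<integral>\<^sup>+t\<in>{a<..<1}. ennreal (f t) \<partial>lborel) = ennreal (LBINT t:{a<..<1}. f t)"
    using integrable a unfolding set_integrable_def set_lebesgue_integral_def
    by (subst nn_integral_eq_integral[symmetric])
      (auto simp: f_def intro!: nn_integral_cong split: split_indicator)
  also have "(LBINT t:{a<..<1}. f t) = - F a"
    using integral a einterval_eq_Icc[of a 1] by (simp add: interval_lebesgue_integral_def)
  finally show ?thesis
    by (simp add: f_def F_def)
qed

lemma nn_integral_shell_le: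
  fixes n :: nat and r \<alpha> :: real
  assumes n: "2 \<le> n" and r: "0 < r" "r \<le> 1" and \<alpha>: "-1 < \<alpha>"
  shows "(\<integral>\<^sup>+t\<in>{0..1}. ennreal ((1 - t\<^sup>2) powr \<alpha>) * indicator {1-r<..} t * ennreal (real n * t ^ (n - 1)) \<partial>lborel)
       \<le> ennreal (real n * ((r * (2 - r)) powr (\<alpha> + 1) / (2 * (\<alpha> + 1))))"
proof -
  have "(1 - t\<^sup>2) powr \<alpha> * (real n * t ^ (n - 1)) \<le> real n * ((1 - t\<^sup>2) powr \<alpha> * t)"
    if "0 \<le> t" "t \<le> 1" for t :: real
  proof -
    have "t ^ (n - 1) \<le> t"
      using power_decreasing[of 1 "n - 1" t] that n by simp
    then show ?thesis
      by (simp add: mult.left_commute mult_left_mono)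
  qed
  \<comment> \<open>at \<open>t = 1\<close> the left integrand vanishes because \<open>0 powr \<alpha> = 0\<close>\<close>
  then have "(\<integral>\<^sup>+t\<in>{0..1}. ennreal ((1 - t\<^sup>2) powr \<alpha>) * indicator {1-r<..} t * ennreal (real n * t ^ (n - 1)) \<partial>lborel)
      \<le> (\<integral>\<^sup>+t\<in>{1-r<..<1}. ennreal n * ennreal ((1 - t\<^sup>2) powr \<alpha> * t) \<partial>lborel)"
    by (intro nn_integral_mono) (auto split: split_indicator simp flip: ennreal_mult intro!: ennreal_leI)
  also have "\<dots> = ennreal n * ennreal ((1 - (1 - r)\<^sup>2) powr (\<alpha> + 1) / (2 * (\<alpha> + 1)))"
    using r \<alpha> by (simp add: nn_integral_cmult mult.assoc nn_integral_one_minus_square_powr)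
  also have "1 - (1 - r)\<^sup>2 = r * (2 - r)"
    by (simp add: power2_eq_square algebra_simps)
  also have "ennreal n * ennreal ((r * (2 - r)) powr (\<alpha> + 1) / (2 * (\<alpha> + 1)))
      = ennreal (real n * ((r * (2 - r)) powr (\<alpha> + 1) / (2 * (\<alpha> + 1))))"
    by (rule ennreal_mult'[symmetric]) simp
  finally show ?thesis .
qed

lemma half_power_mult_le_power:
  fixes t :: real
  assumes "1/2 \<le> t" "2 \<le> n"
  shows "(1/2) ^ (n - 2) * t \<le> t ^ (n - 1)"
proof -
  have "(1/2) ^ (n - 2) * t \<le> t ^ (n - 2) * t"
    using assms by (intro mult_right_mono power_mono) auto
  also have "\<dots> = t ^ (n - 1)"
    using assms(2) by (simp add: power_Suc2[symmetric] Suc_diff_Suc numeral_2_eq_2)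
  finally show ?thesis .
qed

lemma nn_integral_shell_ge:
  fixes n :: nat and r \<alpha> :: real
  assumes n: "2 \<le> n" and r: "0 < r" "r \<le> 1" and \<alpha>: "-1 < \<alpha>"
  shows "ennreal ((1/2) ^ (n - 2) * (1/2) powr (\<alpha> + 1) * (real n * ((r * (2 - r)) powr (\<alpha> + 1) / (2 * (\<alpha> + 1)))))
       \<le> (\<integral>\<^sup>+t\<in>{0..1}. ennreal ((1 - t\<^sup>2) powr \<alpha>) * indicator {1-r<..} t * ennreal (real n * t ^ (n - 1)) \<partial>lborel)"
proof -
  define c where "c = (1/2) ^ (n - 2) * real n"
  have "(1/2) powr (\<alpha> + 1) * (r * (2 - r)) powr (\<alpha> + 1) = (1/2 * (r * (2 - r))) powr (\<alpha> + 1)"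
    using r by (intro powr_mult[symmetric])
  also have "\<dots> \<le> (1 - (1 - r/2)\<^sup>2) powr (\<alpha> + 1)"
    using r \<alpha> by (intro powr_mono2) (auto simp: power2_eq_square field_simps)
  finally have "(1/2) ^ (n - 2) * (1/2) powr (\<alpha> + 1) * (real n * ((r * (2 - r)) powr (\<alpha> + 1) / (2 * (\<alpha> + 1))))
      \<le> c * ((1 - (1 - r/2)\<^sup>2) powr (\<alpha> + 1) / (2 * (\<alpha> + 1)))"
    using \<alpha> unfolding c_def by (simp add: divide_right_mono mult_left_mono mult.assoc mult.left_commute)
  then have "ennreal ((1/2) ^ (n - 2) * (1/2) powr (\<alpha> + 1) * (real n * ((r * (2 - r)) powr (\<alpha> + 1) / (2 * (\<alpha> + 1)))))
      \<le> ennreal c * ennreal ((1 - (1 - r/2)\<^sup>2) powr (\<alpha> + 1) / (2 * (\<alpha> + 1)))"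
    unfolding c_def by (simp add: ennreal_leI flip: ennreal_mult')
  \<comment> \<open>shrinking the shell to \<open>(1 - r/2, 1)\<close> keeps \<open>t \<ge> 1/2\<close>\<close>
  also have "\<dots> = (\<integral>\<^sup>+t\<in>{1-r/2<..<1}. ennreal c * ennreal ((1 - t\<^sup>2) powr \<alpha> * t) \<partial>lborel)"
    using r \<alpha> by (simp add: nn_integral_cmult mult.assoc nn_integral_one_minus_square_powr)
  also have "\<dots> \<le> (\<integral>\<^sup>+t\<in>{0..1}. ennreal ((1 - t\<^sup>2) powr \<alpha>) * indicator {1-r<..} t * ennreal (real n * t ^ (n - 1)) \<partial>lborel)"
  proof (intro nn_integral_mono)
    fix t :: real
    have "c * ((1 - t\<^sup>2) powr \<alpha> * t) \<le> (1 - t\<^sup>2) powr \<alpha> * (real n * t ^ (n - 1))"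
      if "1/2 \<le> t"
      using mult_left_mono[OF half_power_mult_le_power[OF that n], of "real n * (1 - t\<^sup>2) powr \<alpha>"]
      unfolding c_def by (simp add: ac_simps)
    then show "ennreal c * ennreal ((1 - t\<^sup>2) powr \<alpha> * t) * indicator {1-r/2<..<1} t
        \<le> ennreal ((1 - t\<^sup>2) powr \<alpha>) * indicator {1-r<..} t * ennreal (real n * t ^ (n - 1)) * indicator {0..1} t"
      using r by (auto split: split_indicator simp flip: ennreal_mult intro!: ennreal_leI simp: c_def)
  qed
  finally show ?thesis .
qed

section \<open>Volume of a circular cone in the unit ball\<close>

lemma mem_circular_cone_iff:
  assumes "0 \<le> cos r"
  shows "z \<in> circular_cone x r \<longleftrightarrow> 0 < inner x z \<and> (cos r * norm z)\<^sup>2 < (inner x z)\<^sup>2"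
proof -
  have "0 \<le> cos r * norm z"
    using assms by simp
  then show ?thesis
    unfolding circular_cone_def
    by (auto intro: power_strict_mono le_less_trans dest: power2_less_imp_less)
qed

lemma norm_diff_scaleR_unit_sq:
  fixes x z :: "'a::real_inner"
  assumes "norm x = 1"
  shows "(norm (z - c *\<^sub>R x))\<^sup>2 = ((norm z)\<^sup>2 - (inner x z)\<^sup>2) + (inner x z - c)\<^sup>2"
proof -
  have "inner x x = 1"
    using assms by (simp add: norm_eq_1[symmetric])
  then show ?thesis
    unfolding power2_norm_eq_inner
    by (simp add: inner_commute algebra_simps power2_eq_square)
qed

lemma sin_ge_half:
  fixes r :: real
  assumes "0 < r" "r \<le> 1"
  shows "r / 2 \<le> sin r"
proof -
  obtain z where z: "0 < z" "z < r" "sin r - sin 0 = (r - 0) * cos z"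
    using MVT2[of 0 r sin cos] assms by (auto intro: DERIV_sin)
  have "cos (pi / 3) < cos z"
    using z assms pi_gt3 by (intro cos_monotone_0_pi) auto
  then have "1 / 2 < cos z"
    by (simp add: cos_60)
  then show ?thesis
    using z assms by (simp add: mult_left_mono)
qed

lemma nat_floor_inverse_mult_bounds:
  fixes r :: real
  assumes "0 < r" "r < 1"
  shows "1/2 \<le> real (nat \<lfloor>1/r\<rfloor>) * r" "real (nat \<lfloor>1/r\<rfloor>) * r \<le> 1"
proof -
  have N: "real (nat \<lfloor>1/r\<rfloor>) = \<lfloor>1/r\<rfloor>"
    using assms by simp
  have "1 \<le> \<lfloor>1/r\<rfloor>" "1/r < \<lfloor>1/r\<rfloor> + 1"
    using assms by (auto simp: le_floor_iff intro: real_of_int_floor_add_one_gt)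
  then have "r \<le> \<lfloor>1/r\<rfloor> * r" "1 < \<lfloor>1/r\<rfloor> * r + r"
    using assms mult_right_mono[of 1 "real_of_int \<lfloor>1/r\<rfloor>" r] by (auto simp: field_simps)
  then show "1/2 \<le> real (nat \<lfloor>1/r\<rfloor>) * r"
    unfolding N by linarith
  show "real (nat \<lfloor>1/r\<rfloor>) * r \<le> 1"
    unfolding N using mult_right_mono[OF of_int_floor_le[of "1/r"], of r] assms by simp
qed

lemma circular_cone_perp_less:
  fixes x z :: "'a::real_inner"
  assumes r: "0 \<le> r" "r \<le> pi / 2" and z: "z \<in> circular_cone x r"
  shows "(norm z)\<^sup>2 - (inner x z)\<^sup>2 < (r * norm z)\<^sup>2"
proof -
  have "0 \<le> cos r"
    using r by (intro cos_ge_zero) auto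
  then have "(cos r * norm z)\<^sup>2 < (inner x z)\<^sup>2"
    using mem_circular_cone_iff z by blast
  then have "(norm z)\<^sup>2 - (inner x z)\<^sup>2 < (sin r * norm z)\<^sup>2"
    by (simp add: sin_squared_eq algebra_simps)
  also have "\<dots> \<le> (r * norm z)\<^sup>2"
    using r sin_x_le_x[of r] sin_ge_zero[of r] by (intro power_mono mult_right_mono) auto
  finally show ?thesis .
qed

lemma circular_cone_inter_ball_subset_balls:
  fixes x :: "'a::real_inner"
  assumes x: "norm x = 1" and r: "0 < r" "r < 1"
  shows "circular_cone x r \<inter> ball 0 1 \<subseteq> (\<Union>k\<le>nat \<lfloor>1/r\<rfloor>. ball ((real k * r) *\<^sub>R x) (2 * r))"
proof
  fix z assume z_mem: "z \<in> circular_cone x r \<inter> ball 0 1"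
  have "0 \<le> cos r"
    using r pi_gt3 by (intro cos_ge_zero) auto
  then have s: "0 < inner x z" and z: "norm z < 1"
    using z_mem mem_circular_cone_iff[of r z x] by auto
  define k where "k = nat \<lfloor>inner x z / r\<rfloor>"
  have "real k = \<lfloor>inner x z / r\<rfloor>"
    using s(1) r unfolding k_def by simp
  then have "real k \<le> inner x z / r" "inner x z / r < real k + 1"
    using of_int_floor_le[of "inner x z / r"] real_of_int_floor_add_one_gt[of "inner x z / r"]
    by linarith+
  then have k: "real k * r \<le> inner x z" "inner x z < real k * r + r"
    using r by (simp_all add: field_simps)
  have "inner x z \<le> norm z"
    using norm_cauchy_schwarz[of x z] x by simp
  then have "k \<le> nat \<lfloor>1/r\<rfloor>"
    unfolding k_def using z r by (intro nat_mono floor_mono divide_right_mono) auto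
  have "(norm z)\<^sup>2 - (inner x z)\<^sup>2 < (r * norm z)\<^sup>2"
    using z_mem r pi_gt3 by (intro circular_cone_perp_less) auto
  also have "\<dots> \<le> r\<^sup>2"
    using r z by (intro power_mono mult_left_le) auto
  finally have "(norm z)\<^sup>2 - (inner x z)\<^sup>2 < r\<^sup>2" .
  moreover have "(inner x z - real k * r)\<^sup>2 \<le> r\<^sup>2"
    using k by (intro power_mono) linarith+
  ultimately have "(norm (z - (real k * r) *\<^sub>R x))\<^sup>2 < r\<^sup>2 + r\<^sup>2"
    unfolding norm_diff_scaleR_unit_sq[OF x, of z "real k * r"] by (rule add_less_le_mono)
  also have "\<dots> \<le> (2 * r)\<^sup>2"
    by (simp add: power2_eq_square)
  finally have "norm (z - (real k * r) *\<^sub>R x) < 2 * r"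
    by (rule power2_less_imp_less) (use r in simp)
  then have "z \<in> ball ((real k * r) *\<^sub>R x) (2 * r)"
    by (simp add: dist_norm norm_minus_commute)
  then show "z \<in> (\<Union>k\<le>nat \<lfloor>1/r\<rfloor>. ball ((real k * r) *\<^sub>R x) (2 * r))"
    using \<open>k \<le> nat \<lfloor>1/r\<rfloor>\<close> by blast
qed

lemma emeasure_circular_cone_inter_ball_le:
  fixes x :: "'a::euclidean_space"
  assumes x: "norm x = 1" and r: "0 < r" "r < 1"
  shows "emeasure lborel (circular_cone x r \<inter> ball 0 1)
       \<le> ennreal (2 ^ (DIM('a) + 1) * unit_ball_vol (real DIM('a)) * r ^ (DIM('a) - 1))"
proof -
  define n where "n = DIM('a)"
  define V where "V = unit_ball_vol (real n)"
  define N where "N = nat \<lfloor>1/r\<rfloor>"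
  have "V \<ge> 0"
    by (simp add: V_def)
  have "(real N + 1) * r \<le> 2"
    using nat_floor_inverse_mult_bounds(2)[OF r] r unfolding N_def by (simp add: distrib_right)
  have "emeasure lborel (circular_cone x r \<inter> ball 0 1)
      \<le> emeasure lborel (\<Union>k\<le>N. ball ((real k * r) *\<^sub>R x) (2 * r))"
    using circular_cone_inter_ball_subset_balls[OF x r] unfolding N_def
    by (intro emeasure_mono) auto
  also have "\<dots> \<le> (\<Sum>k\<le>N. emeasure lborel (ball ((real k * r) *\<^sub>R x) (2 * r)))"
    by (intro emeasure_subadditive_finite) auto
  also have "\<dots> = (\<Sum>k\<le>N. ennreal (V * (2 * r) ^ n))"
    using r by (simp add: emeasure_ball V_def n_def)
  also have "\<dots> = ennreal ((real N + 1) * (V * (2 * r) ^ n))"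
    using r \<open>V \<ge> 0\<close> by (simp add: ennreal_mult' ennreal_of_nat_eq_real_of_nat add.commute)
  also have "(real N + 1) * (V * (2 * r) ^ n) = ((real N + 1) * r) * (2 ^ n * V * r ^ (n - 1))"
  proof -
    obtain m where "n = Suc m"
      using DIM_positive[where 'a='a] not0_implies_Suc unfolding n_def by blast
    then show ?thesis
      by (simp add: power_mult_distrib ac_simps)
  qed
  also have "ennreal \<dots> \<le> ennreal (2 * (2 ^ n * V * r ^ (n - 1)))"
    using \<open>(real N + 1) * r \<le> 2\<close> \<open>V \<ge> 0\<close> r by (intro ennreal_leI mult_right_mono) auto
  finally show ?thesis
    by (simp add: n_def V_def mult.assoc)
qed

lemma mem_circular_cone_if_perp_less:
  fixes x y :: "'a::real_inner"
  assumes x: "norm x = 1" and r: "0 \<le> cos r"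
    and s: "0 < inner x y" "(norm y)\<^sup>2 - (inner x y)\<^sup>2 < (sin r * inner x y)\<^sup>2"
  shows "y \<in> circular_cone x r"
proof -
  have "\<bar>inner x y\<bar> \<le> norm y"
    using Cauchy_Schwarz_ineq2[of x y] x by simp
  then have "0 \<le> (norm y)\<^sup>2 - (inner x y)\<^sup>2"
    using abs_le_square_iff[of "inner x y" "norm y"] by simp
  then have "(cos r)\<^sup>2 * ((norm y)\<^sup>2 - (inner x y)\<^sup>2) \<le> (norm y)\<^sup>2 - (inner x y)\<^sup>2"
    by (rule mult_left_le_one_le) (auto simp: abs_square_le_1)
  then have "(cos r * norm y)\<^sup>2 < (sin r)\<^sup>2 * (inner x y)\<^sup>2 + (cos r)\<^sup>2 * (inner x y)\<^sup>2"
    using s(2) by (simp add: algebra_simps)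
  also have "\<dots> = (inner x y)\<^sup>2"
    by (simp flip: distrib_right)
  finally show ?thesis
    using mem_circular_cone_iff[OF r] s(1) by blast
qed

lemma axial_coordinate_bounds:
  fixes s c \<rho> \<sigma> :: real
  assumes "\<bar>s - c\<bar> < \<rho>" "2 * \<rho> \<le> c * \<sigma>" "0 \<le> \<sigma>" "\<sigma> \<le> 1"
  shows "0 < s" "\<rho> < \<sigma> * s"
proof -
  have "0 < \<rho>" "0 < c * \<sigma>"
    using assms(1,2) by linarith+
  then have "0 < \<sigma>" "0 < c"
    using assms(3) by (auto simp: zero_less_mult_iff)
  have "c * \<sigma> \<le> c" "\<rho> * \<sigma> \<le> \<rho>"
    using \<open>0 < c\<close> \<open>0 < \<rho>\<close> assms(4) by (auto intro: mult_left_le)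
  then show "0 < s"
    using assms(1,2) by linarith
  have "\<rho> \<le> \<sigma> * (c - \<rho>)"
    using assms(2) \<open>\<rho> * \<sigma> \<le> \<rho>\<close> by (simp add: right_diff_distrib mult.commute)
  also have "\<dots> < \<sigma> * s"
    using assms(1) \<open>0 < \<sigma>\<close> by (intro mult_strict_left_mono) auto
  finally show "\<rho> < \<sigma> * s" .
qed

lemma ball_subset_circular_cone:
  fixes x :: "'a::real_inner"
  assumes x: "norm x = 1" and r: "0 \<le> cos r" "0 \<le> sin r" and \<rho>: "2 * \<rho> \<le> c * sin r"
  shows "ball (c *\<^sub>R x) \<rho> \<subseteq> circular_cone x r"
proof
  fix y assume "y \<in> ball (c *\<^sub>R x) \<rho>"
  then have w: "norm (y - c *\<^sub>R x) < \<rho>"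
    by (simp add: dist_norm norm_minus_commute)
  define s where "s = inner x y"
  have "inner x (y - c *\<^sub>R x) = s - c"
    using x by (simp add: s_def inner_diff_right norm_eq_1[symmetric])
  then have "\<bar>s - c\<bar> < \<rho>"
    using Cauchy_Schwarz_ineq2[of x "y - c *\<^sub>R x"] x w by simp
  note s = axial_coordinate_bounds[OF this \<rho> r(2) sin_le_one]
  have "(norm (y - c *\<^sub>R x))\<^sup>2 = ((norm y)\<^sup>2 - s\<^sup>2) + (s - c)\<^sup>2"
    unfolding s_def by (rule norm_diff_scaleR_unit_sq[OF x])
  moreover have "(norm (y - c *\<^sub>R x))\<^sup>2 < \<rho>\<^sup>2"
    using w by (intro power_strict_mono) auto
  moreover have "\<rho>\<^sup>2 < (sin r * s)\<^sup>2"
    using s order.strict_trans1[OF norm_ge_zero w] by (intro power_strict_mono) auto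
  moreover have "0 \<le> (s - c)\<^sup>2"
    by simp
  ultimately have "(norm y)\<^sup>2 - s\<^sup>2 < (sin r * s)\<^sup>2"
    by linarith
  with s(1) show "y \<in> circular_cone x r"
    using mem_circular_cone_if_perp_less[OF x r(1)] unfolding s_def by blast
qed

lemma disjoint_family_balls_on_line:
  fixes x :: "'a::real_normed_vector"
  assumes x: "norm x = 1" and d: "0 \<le> d"
  shows "disjoint_family (\<lambda>k::nat. ball ((a + real k * d) *\<^sub>R x) (d/2))"
  unfolding disjoint_family_on_def
proof (intro ballI impI)
  fix j k :: nat assume "j \<noteq> k"
  then have "1 \<le> \<bar>real j - real k\<bar>"
    by linarith
  then have "d/2 + d/2 \<le> \<bar>real j - real k\<bar> * d"
    using d by (simp add: mult_le_cancel_right1)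
  also have "\<dots> = \<bar>(a + real j * d) - (a + real k * d)\<bar>"
    using d by (simp add: abs_mult flip: left_diff_distrib)
  also have "\<dots> = dist ((a + real j * d) *\<^sub>R x) ((a + real k * d) *\<^sub>R x)"
    using x by (simp only: dist_norm norm_scaleR scaleR_diff_left[symmetric] mult_1_right)
  finally show "ball ((a + real j * d) *\<^sub>R x) (d/2) \<inter> ball ((a + real k * d) *\<^sub>R x) (d/2) = {}"
    by (rule disjoint_ballI)
qed

lemma ball_on_axis_subset_circular_cone_inter_ball:
  fixes x :: "'a::euclidean_space"
  assumes x: "norm x = 1" and r: "0 < r" "r < 1" and k: "k < nat \<lfloor>1/r\<rfloor>"
  shows "ball ((1/2 + real k * (r/4)) *\<^sub>R x) (r/8) \<subseteq> circular_cone x r \<inter> ball 0 1"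
proof (rule Int_greatest)
  have "(real k + 1) * r \<le> real (nat \<lfloor>1/r\<rfloor>) * r"
    using k r by (intro mult_right_mono) auto
  then have k: "real k * r \<le> 1 - r"
    using nat_floor_inverse_mult_bounds(2)[OF r] by (simp add: distrib_right)
  have "2 * (r/8) \<le> 1/2 * (r/2)"
    by simp
  also have "\<dots> \<le> (1/2 + real k * (r/4)) * sin r"
    using r sin_ge_half[of r] by (intro mult_mono) auto
  finally show "ball ((1/2 + real k * (r/4)) *\<^sub>R x) (r/8) \<subseteq> circular_cone x r"
    using x r pi_gt3 sin_ge_half[of r]
    by (intro ball_subset_circular_cone) (auto intro: cos_ge_zero)
  show "ball ((1/2 + real k * (r/4)) *\<^sub>R x) (r/8) \<subseteq> ball 0 1"
    using x r k by (subst ball_subset_ball_iff) (auto simp: dist_norm)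
qed

lemma emeasure_circular_cone_inter_ball_ge:
  fixes x :: "'a::euclidean_space"
  assumes x: "norm x = 1" and r: "0 < r" "r < 1"
  shows "ennreal (unit_ball_vol (real DIM('a)) * r ^ (DIM('a) - 1) / (2 * 8 ^ DIM('a)))
       \<le> emeasure lborel (circular_cone x r \<inter> ball 0 1)"
proof -
  define n where "n = DIM('a)"
  define V where "V = unit_ball_vol (real n)"
  define N where "N = nat \<lfloor>1/r\<rfloor>"
  define B where "B k = ball ((1/2 + real k * (r/4)) *\<^sub>R x) (r/4/2)" for k :: nat
  have "V \<ge> 0"
    by (simp add: V_def)
  have packed: "emeasure lborel (\<Union>k<N. B k) \<le> emeasure lborel (circular_cone x r \<inter> ball 0 1)"
    using ball_on_axis_subset_circular_cone_inter_ball[OF x r] unfolding B_def N_def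
    by (intro emeasure_mono) auto
  have "emeasure lborel (\<Union>k<N. B k) = (\<Sum>k<N. emeasure lborel (B k))"
    using disjoint_family_balls_on_line[OF x, of "r/4" "1/2"] r unfolding B_def
    by (intro sum_emeasure[symmetric]) (auto intro: disjoint_family_on_mono)
  also have "\<dots> = ennreal (real N * (V * (r/8) ^ n))"
    using r \<open>V \<ge> 0\<close>
    by (simp add: B_def emeasure_ball V_def n_def ennreal_mult' ennreal_of_nat_eq_real_of_nat)
  finally have measure_balls: "emeasure lborel (\<Union>k<N. B k) = ennreal (real N * (V * (r/8) ^ n))" .
  have "V * r ^ (n - 1) / (2 * 8 ^ n) \<le> real N * (V * (r/8) ^ n)"
  proof -
    obtain m where m: "n = Suc m"
      using DIM_positive[where 'a='a] not0_implies_Suc unfolding n_def by blast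
    have "1/2 \<le> real N * r"
      using nat_floor_inverse_mult_bounds(1)[OF r] unfolding N_def .
    then have "1/2 * (V * r ^ m / 8 ^ n) \<le> (real N * r) * (V * r ^ m / 8 ^ n)"
      using \<open>V \<ge> 0\<close> r by (intro mult_right_mono) auto
    then show ?thesis
      by (simp add: m power_divide ac_simps)
  qed
  then have "ennreal (V * r ^ (n - 1) / (2 * 8 ^ n)) \<le> emeasure lborel (\<Union>k<N. B k)"
    unfolding measure_balls by (rule ennreal_leI)
  from this packed show ?thesis
    unfolding n_def V_def by (rule order.trans)
qed

section \<open>Weighted volume of Bhat\<close>

lemma nn_integral_weight_Bhat:
  fixes x :: "'a::euclidean_space"
  assumes "norm x = 1" "0 < r" "r < 1"
  shows "(\<integral>\<^sup>+z\<in>Bhat x r \<inter> ball 0 1. ennreal (weight \<alpha> z) \<partial>lborel)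
       = emeasure lborel (circular_cone x r \<inter> ball 0 1)
         * (\<integral>\<^sup>+t\<in>{0..1}. ennreal ((1 - t\<^sup>2) powr \<alpha>) * indicator {1-r<..} t
              * ennreal (real DIM('a) * t ^ (DIM('a) - 1)) \<partial>lborel)"
proof -
  have "(\<integral>\<^sup>+z\<in>Bhat x r \<inter> ball 0 1. ennreal (weight \<alpha> z) \<partial>lborel)
      = (\<integral>\<^sup>+z\<in>circular_cone x r \<inter> ball 0 1. ennreal ((1 - (norm z)\<^sup>2) powr \<alpha>) * indicator {1-r<..} (norm z) \<partial>lborel)"
    unfolding Bhat_eq_circular_cone[OF assms] weight_def
    by (intro nn_integral_cong) (auto split: split_indicator)
  also have "\<dots> = emeasure lborel (circular_cone x r \<inter> ball 0 1)
         * (\<integral>\<^sup>+t\<in>{0..1}. ennreal ((1 - t\<^sup>2) powr \<alpha>) * indicator {1-r<..} t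
              * ennreal (real DIM('a) * t ^ (DIM('a) - 1)) \<partial>lborel)"
    by (rule nn_integral_radial_cone) (auto intro: scaleR_in_circular_cone)
  finally show ?thesis .
qed

lemma power_times_powr_shell:
  fixes r \<alpha> :: real
  assumes "0 < r" "r \<le> 2" "1 \<le> n"
  shows "r ^ (n - 1) * (r * (2 - r)) powr (\<alpha> + 1) = r powr (real n + \<alpha>) * (2 - r) powr (\<alpha> + 1)"
proof -
  have "r ^ (n - 1) = r powr real (n - 1)"
    using assms(1) by (rule powr_realpow[symmetric])
  moreover have "(r * (2 - r)) powr (\<alpha> + 1) = r powr (\<alpha> + 1) * (2 - r) powr (\<alpha> + 1)"
    using assms by (simp add: powr_mult)
  moreover have "r powr real (n - 1) * r powr (\<alpha> + 1) = r powr (real n + \<alpha>)"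
    using assms by (simp add: powr_add[symmetric])
  ultimately show ?thesis
    by (simp only: mult.assoc[symmetric])
qed

lemma nn_integral_weight_Bhat_le:
  fixes x :: "'a::euclidean_space"
  assumes n: "2 \<le> DIM('a)" and \<alpha>: "-1 < \<alpha>" and x: "norm x = 1" and r: "0 < r" "r < 1"
  shows "(\<integral>\<^sup>+z\<in>Bhat x r \<inter> ball 0 1. ennreal (weight \<alpha> z) \<partial>lborel)
       \<le> ennreal (2 ^ DIM('a) * real DIM('a) * unit_ball_vol (real DIM('a))
           * (r ^ (DIM('a) - 1) * (r * (2 - r)) powr (\<alpha> + 1) / (\<alpha> + 1)))"
proof -
  define n where "n = DIM('a)"
  define V where "V = unit_ball_vol (real n)"
  define S where "S = real n * ((r * (2 - r)) powr (\<alpha> + 1) / (2 * (\<alpha> + 1)))"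
  have "0 \<le> V" "0 \<le> S"
    using \<alpha> by (auto simp: V_def S_def)
  have "(\<integral>\<^sup>+z\<in>Bhat x r \<inter> ball 0 1. ennreal (weight \<alpha> z) \<partial>lborel)
      \<le> ennreal (2 ^ (n + 1) * V * r ^ (n - 1)) * ennreal S"
    using emeasure_circular_cone_inter_ball_le[OF x r] nn_integral_shell_le[of n r \<alpha>] n r \<alpha>
    unfolding nn_integral_weight_Bhat[OF x r] S_def V_def n_def by (intro mult_mono) auto
  also have "\<dots> = ennreal (2 ^ (n + 1) * V * r ^ (n - 1) * S)"
    using \<open>0 \<le> V\<close> \<open>0 \<le> S\<close> r by (intro ennreal_mult[symmetric]) auto
  also have "2 ^ (n + 1) * V * r ^ (n - 1) * S
      = 2 ^ n * real n * V * (r ^ (n - 1) * (r * (2 - r)) powr (\<alpha> + 1) / (\<alpha> + 1))"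
    using \<alpha> by (simp add: S_def field_simps)
  finally show ?thesis
    unfolding n_def V_def .
qed

lemma nn_integral_weight_Bhat_ge:
  fixes x :: "'a::euclidean_space"
  assumes n: "2 \<le> DIM('a)" and \<alpha>: "-1 < \<alpha>" and x: "norm x = 1" and r: "0 < r" "r < 1"
  shows "ennreal (real DIM('a) * (1/2) powr (\<alpha> + 1) / 16 ^ DIM('a) * unit_ball_vol (real DIM('a))
           * (r ^ (DIM('a) - 1) * (r * (2 - r)) powr (\<alpha> + 1) / (\<alpha> + 1)))
       \<le> (\<integral>\<^sup>+z\<in>Bhat x r \<inter> ball 0 1. ennreal (weight \<alpha> z) \<partial>lborel)"
proof -
  define n where "n = DIM('a)"
  define V where "V = unit_ball_vol (real n)"
  define S where "S = real n * ((r * (2 - r)) powr (\<alpha> + 1) / (2 * (\<alpha> + 1)))"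
  have "0 \<le> V" "0 \<le> S"
    using \<alpha> by (auto simp: V_def S_def)
  obtain m where m: "n = m + 2"
    using n unfolding n_def by (metis add.commute le_Suc_ex)
  have "(16::real) ^ n = 2 ^ n * 8 ^ n"
    by (simp flip: power_mult_distrib)
  then have "(1/2) ^ (n - 2) / (4 * 8 ^ n) = (1 / 16 ^ n :: real)"
    using m by (simp add: power_add power_one_over)
  then have "real n * (1/2) powr (\<alpha> + 1) / 16 ^ n * V * (r ^ (n - 1) * (r * (2 - r)) powr (\<alpha> + 1) / (\<alpha> + 1))
      = V * r ^ (n - 1) / (2 * 8 ^ n) * ((1/2) ^ (n - 2) * (1/2) powr (\<alpha> + 1) * S)"
    using \<alpha> by (simp add: S_def field_simps)
  also have "ennreal \<dots>
      = ennreal (V * r ^ (n - 1) / (2 * 8 ^ n)) * ennreal ((1/2) ^ (n - 2) * (1/2) powr (\<alpha> + 1) * S)"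
    using \<open>0 \<le> V\<close> \<open>0 \<le> S\<close> r by (intro ennreal_mult) auto
  also have "\<dots> \<le> (\<integral>\<^sup>+z\<in>Bhat x r \<inter> ball 0 1. ennreal (weight \<alpha> z) \<partial>lborel)"
    using emeasure_circular_cone_inter_ball_ge[OF x r] nn_integral_shell_ge[of n r \<alpha>] n r \<alpha>
    unfolding nn_integral_weight_Bhat[OF x r] S_def V_def n_def by (intro mult_mono) auto
  finally show ?thesis
    unfolding n_def V_def .
qed

lemma nu_alpha_Bhat_bounds:
  fixes x :: "'a::euclidean_space"
  assumes n: "2 \<le> DIM('a)" and \<alpha>: "-1 < \<alpha>" and x: "norm x = 1" and r: "0 < r" "r < 1"
  shows "real DIM('a) * (1/2) powr (\<alpha> + 1) / 16 ^ DIM('a)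
           * (c_alpha \<alpha> TYPE('a) / (\<alpha> + 1)) * r powr (real DIM('a) + \<alpha>) * (2 - r) powr (\<alpha> + 1)
         \<le> nu_alpha \<alpha> (Bhat x r)"
    and "nu_alpha \<alpha> (Bhat x r)
         \<le> 2 ^ DIM('a) * real DIM('a)
           * (c_alpha \<alpha> TYPE('a) / (\<alpha> + 1)) * r powr (real DIM('a) + \<alpha>) * (2 - r) powr (\<alpha> + 1)"
proof -
  define P where "P = c_alpha \<alpha> TYPE('a) / (\<alpha> + 1) * r powr (real DIM('a) + \<alpha>) * (2 - r) powr (\<alpha> + 1)"
  define n where "n = DIM('a)"
  define V where "V = unit_ball_vol (real n)"
  define c where "c = c_alpha \<alpha> TYPE('a)"
  define W where "W = r ^ (n - 1) * (r * (2 - r)) powr (\<alpha> + 1) / (\<alpha> + 1)"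
  define I where "I = (\<integral>\<^sup>+z\<in>Bhat x r \<inter> ball 0 1. ennreal (weight \<alpha> z) \<partial>lborel)"
  have "0 < V" "0 \<le> c" "0 \<le> W"
    using \<alpha> r by (auto simp: V_def c_def c_alpha_def W_def)
  have "P = c * W"
    using power_times_powr_shell[of r n \<alpha>] r n unfolding P_def W_def c_def n_def by simp
  have nu: "nu_alpha \<alpha> (Bhat x r) = c / V * enn2real I"
    using content_ball[of 1 "0::'a"] unfolding nu_alpha_def c_def V_def I_def n_def by simp
  have I_le: "I \<le> ennreal (2 ^ n * real n * V * W)"
    using nn_integral_weight_Bhat_le[OF n \<alpha> x r] unfolding I_def n_def V_def W_def .
  have upper: "enn2real I \<le> 2 ^ n * real n * V * W"
    using enn2real_mono[OF I_le] \<open>0 < V\<close> \<open>0 \<le> W\<close> by simp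
  have I_ge: "ennreal (real n * (1/2) powr (\<alpha> + 1) / 16 ^ n * V * W) \<le> I"
    using nn_integral_weight_Bhat_ge[OF n \<alpha> x r] unfolding I_def n_def V_def W_def .
  have "I < top"
    using I_le by (simp add: le_less_trans)
  then have lower: "real n * (1/2) powr (\<alpha> + 1) / 16 ^ n * V * W \<le> enn2real I"
    using enn2real_mono[OF I_ge] \<open>0 < V\<close> \<open>0 \<le> W\<close> by simp
  have "real n * (1/2) powr (\<alpha> + 1) / 16 ^ n * P \<le> nu_alpha \<alpha> (Bhat x r)"
    using mult_left_mono[OF lower, of "c / V"] \<open>0 < V\<close> \<open>0 \<le> c\<close>
    unfolding nu \<open>P = c * W\<close> by (simp add: field_simps)
  then show "real DIM('a) * (1/2) powr (\<alpha> + 1) / 16 ^ DIM('a)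
           * (c_alpha \<alpha> TYPE('a) / (\<alpha> + 1)) * r powr (real DIM('a) + \<alpha>) * (2 - r) powr (\<alpha> + 1)
         \<le> nu_alpha \<alpha> (Bhat x r)"
    by (simp add: P_def n_def mult.assoc)
  have "nu_alpha \<alpha> (Bhat x r) \<le> 2 ^ n * real n * P"
    using mult_left_mono[OF upper, of "c / V"] \<open>0 < V\<close> \<open>0 \<le> c\<close>
    unfolding nu \<open>P = c * W\<close> by (simp add: field_simps)
  then show "nu_alpha \<alpha> (Bhat x r)
         \<le> 2 ^ DIM('a) * real DIM('a)
           * (c_alpha \<alpha> TYPE('a) / (\<alpha> + 1)) * r powr (real DIM('a) + \<alpha>) * (2 - r) powr (\<alpha> + 1)"
    by (simp add: P_def n_def mult.assoc)
qed

theorem lemma2p2: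
  fixes dummy :: "real ^ 'n"
  assumes "CARD('n) \<ge> 3"
  shows "\<exists>C2>0. \<forall>\<alpha>>-1. \<exists>C1>0. \<forall>r (x::real^'n). 0 < r \<and> r < 1 \<and> norm x = 1 \<longrightarrow>
     C1 * (c_alpha \<alpha> TYPE(real^'n) / (\<alpha> + 1)) * r powr (real CARD('n) + \<alpha>) * (2 - r) powr (\<alpha> + 1)
       \<le> nu_alpha \<alpha> (Bhat x r)
   \<and> nu_alpha \<alpha> (Bhat x r)
       \<le> C2 * (c_alpha \<alpha> TYPE(real^'n) / (\<alpha> + 1)) * r powr (real CARD('n) + \<alpha>) * (2 - r) powr (\<alpha> + 1)"
proof -
  have "2 \<le> DIM(real^'n)"
    using assms by simp
  note bounds = nu_alpha_Bhat_bounds[OF this, unfolded DIM_cart DIM_real mult_1_right]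
  have "0 < real CARD('n) * (1/2) powr (\<alpha> + 1) / 16 ^ CARD('n)" for \<alpha> :: real
    by simp
  with bounds show ?thesis
    by (intro exI[of _ "2 ^ CARD('n) * real CARD('n)"] conjI) (simp, blast)
qed

end
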